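(* Let $L$ be a real vector space endowed with a preorder $\le$, let $C\subset L$ be nonempty and $M\subset C$ a nonempty linear subspace such that: $C$ is exhaustive (for every $X\in L$ there is $X_0\in C$ with $X_0\ge X$); $X+m\in C$ for all $X\in C$, $m\in M$; and $X+m\le Y+m$ for all $m\in M$ and $X,Y\in L$ with $X\le Y$. Let $H\colon C\to\mathbb{R}$ be a premium principle and define $$R_{\mathrm{Max}}(X):=\inf\{H(X_0)\mid X_0\in C,\ X_0\ge X\},\quad X\in L.$$ Then $R_{\mathrm{Max}}\colon L\to\mathbb{R}$ is a risk measure with $R_{\mathrm{Max}}(X)\le H(X)$ for all $X\in C$ and $R_{\mathrm{Max}}(m)=H(m)$ for all $m\in M$. In particular, $D_{\mathrm{Min}}(X):=H(X)-R_{\mathrm{Max}}(X)$, $X\in C$, is a deviation measure and $H=R_{\mathrm{Max}}+D_{\mathrm{Min}}$ on $C$. Moreover, if $R\colon L\to\mathbb{R}$ is a risk measure and $D\colon C\to\mathbb{R}$ a deviation measure with $H(X)=R(X)+D(X)$ for all $X\in C$, then $R(X)\le R_{\mathrm{Max}}(X)$ for all $X\in L$ and $D(X)\ge D_{\mathrm{Min}}(X)$ for all $X\in C$.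
   Context: A premium principle is a map $H\colon C\to\mathbb{R}$ with (P1') $H(X+m)=H(X)+H(m)$ for all $X\in C$, $m\in M$; (P2') $H(0)=0$ and $H(X)\ge0$ for all $X\in C$ with $X\ge0$; (P3') $\inf\{H(X_0)\mid X_0\in C,\ X_0\ge X\}>-\infty$ for all $X\in L$. A risk measure is a map $R\colon L\to\mathbb{R}$ with $R(X+m)=R(X)+R(m)$ for all $X\in C$, $m\in M$, and $R(0)=0$, $R(X)\le R(Y)$ for all $X,Y\in L$ with $X\le Y$. A deviation measure is a map $D\colon C\to\mathbb{R}$ with $D(X+m)=D(X)$ for all $X\in C$, $m\in M$, $D(0)=0$, and $D(X)\ge0$ for all $X\in C$. *)

theory Defs
  imports "HOL-Analysis.Analysis"
begin

text \<open>L is modelled as the type 'a (a real vector space carrying a preorder \<le>).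
  Functions defined only on C are modelled as total functions whose values
  outside C are irrelevant.\<close>

definition premium_principle ::
  "'a::{real_vector,preorder} set \<Rightarrow> 'a set \<Rightarrow> ('a \<Rightarrow> real) \<Rightarrow> bool" where
  "premium_principle C M H \<longleftrightarrow>
     (\<forall>X\<in>C. \<forall>m\<in>M. H (X + m) = H X + H m) \<and>
     H 0 = 0 \<and> (\<forall>X\<in>C. 0 \<le> X \<longrightarrow> H X \<ge> 0) \<and>
     (\<forall>X. bdd_below {H X0 | X0. X0 \<in> C \<and> X0 \<ge> X})"

definition risk_measure ::
  "'a::{real_vector,preorder} set \<Rightarrow> 'a set \<Rightarrow> ('a \<Rightarrow> real) \<Rightarrow> bool" where
  "risk_measure C M R \<longleftrightarrow>
     (\<forall>X\<in>C. \<forall>m\<in>M. R (X + m) = R X + R m) \<and>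
     R 0 = 0 \<and> (\<forall>X Y. X \<le> Y \<longrightarrow> R X \<le> R Y)"

definition deviation_measure ::
  "'a::{real_vector,preorder} set \<Rightarrow> 'a set \<Rightarrow> ('a \<Rightarrow> real) \<Rightarrow> bool" where
  "deviation_measure C M D \<longleftrightarrow>
     (\<forall>X\<in>C. \<forall>m\<in>M. D (X + m) = D X) \<and>
     D 0 = 0 \<and> (\<forall>X\<in>C. D X \<ge> 0)"

definition R_Max :: "'a::{real_vector,preorder} set \<Rightarrow> ('a \<Rightarrow> real) \<Rightarrow> 'a \<Rightarrow> real" where
  "R_Max C H X = Inf {H X0 | X0. X0 \<in> C \<and> X0 \<ge> X}"

end

theory Submission
  imports Defs
begin

text \<open>
  Translating the feasible set \<open>{X0 \<in> C. X \<le> X0}\<close> by \<open>m \<in> M\<close>, and back by \<open>-m\<close>, shifts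
  every premium by H m, so \<open>R_Max (X + m) = R_Max X + H m\<close> for all X. Since nonnegative
  positions have nonnegative premium, \<open>R_Max 0 = H 0 = 0\<close>, whence \<open>R_Max m = H m\<close> on M.
  If H = R + D with R monotone and D \<ge> 0, then \<open>R X \<le> R X0 \<le> H X0\<close> for every feasible X0,
  hence R \<le> R_Max.
\<close>

lemma premium_principle_uminus:
  assumes H: "premium_principle C M H" and M: "subspace M" "M \<subseteq> C" and m: "m \<in> M"
  shows "H (- m) = - H m"
proof -
  have "H (m + - m) = H m + H (- m)"
    using H M m subspace_neg[OF M(1) m] unfolding premium_principle_def by blast
  then show ?thesis
    using H unfolding premium_principle_def by simp
qed

lemma R_Max_le:
  assumes "premium_principle C M H" and "X0 \<in> C" and "X \<le> X0"
  shows "R_Max C H X \<le> H X0"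
  using assms unfolding premium_principle_def R_Max_def by (auto intro: cInf_lower)

lemma le_R_Max:
  assumes "\<exists>X0\<in>C. X \<le> X0" and "\<And>X0. X0 \<in> C \<Longrightarrow> X \<le> X0 \<Longrightarrow> c \<le> H X0"
  shows "c \<le> R_Max C H X"
  using assms unfolding R_Max_def by (auto intro: cInf_greatest)

lemma R_Max_le_self:
  assumes "premium_principle C M H" and "X \<in> C"
  shows "R_Max C H X \<le> H X"
  using R_Max_le[OF assms order_refl] .

lemma R_Max_mono:
  assumes H: "premium_principle C M H" and exhaustive: "\<forall>X. \<exists>X0\<in>C. X0 \<ge> X"
    and "X \<le> Y"
  shows "R_Max C H X \<le> R_Max C H Y"
  using exhaustive by (auto intro!: le_R_Max R_Max_le[OF H] order_trans[OF \<open>X \<le> Y\<close>])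

lemma R_Max_zero:
  assumes H: "premium_principle C M H" and "0 \<in> C"
  shows "R_Max C H 0 = 0"
proof (rule antisym)
  show "R_Max C H 0 \<le> 0"
    using R_Max_le_self[OF H \<open>0 \<in> C\<close>] H unfolding premium_principle_def by simp
  show "0 \<le> R_Max C H 0"
    using \<open>0 \<in> C\<close> H unfolding premium_principle_def by (auto intro: le_R_Max)
qed

lemma R_Max_translate_le:
  assumes H: "premium_principle C M H" and m: "m \<in> M"
    and exhaustive: "\<forall>X. \<exists>X0\<in>C. X0 \<ge> X"
    and C_trans: "\<forall>X\<in>C. \<forall>m\<in>M. X + m \<in> C"
    and le_trans_inv: "\<forall>m\<in>M. \<forall>X Y. X \<le> Y \<longrightarrow> X + m \<le> Y + m"
  shows "R_Max C H (X + m) \<le> R_Max C H X + H m"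
proof -
  have "R_Max C H (X + m) - H m \<le> R_Max C H X"
  proof (rule le_R_Max)
    fix X0 assume X0: "X0 \<in> C" "X \<le> X0"
    have "R_Max C H (X + m) \<le> H (X0 + m)"
      using X0 m C_trans le_trans_inv by (intro R_Max_le[OF H]) auto
    also have "\<dots> = H X0 + H m"
      using H X0 m unfolding premium_principle_def by blast
    finally show "R_Max C H (X + m) - H m \<le> H X0" by simp
  qed (use exhaustive in blast)
  then show ?thesis by simp
qed

lemma R_Max_translate:
  assumes H: "premium_principle C M H" and M: "subspace M" "M \<subseteq> C" and m: "m \<in> M"
    and exhaustive: "\<forall>X. \<exists>X0\<in>C. X0 \<ge> X"
    and C_trans: "\<forall>X\<in>C. \<forall>m\<in>M. X + m \<in> C"
    and le_trans_inv: "\<forall>m\<in>M. \<forall>X Y. X \<le> Y \<longrightarrow> X + m \<le> Y + m"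
  shows "R_Max C H (X + m) = R_Max C H X + H m"
proof (rule antisym)
  show "R_Max C H (X + m) \<le> R_Max C H X + H m"
    using R_Max_translate_le[OF H m exhaustive C_trans le_trans_inv] .
  have "R_Max C H X = R_Max C H ((X + m) + - m)"
    by simp
  also have "\<dots> \<le> R_Max C H (X + m) + H (- m)"
    using R_Max_translate_le[OF H subspace_neg[OF M(1) m] exhaustive C_trans le_trans_inv] .
  finally show "R_Max C H X + H m \<le> R_Max C H (X + m)"
    using premium_principle_uminus[OF H M m] by simp
qed

lemma R_Max_subspace:
  assumes H: "premium_principle C M H" and M: "subspace M" "M \<subseteq> C" and m: "m \<in> M"
    and exhaustive: "\<forall>X. \<exists>X0\<in>C. X0 \<ge> X"
    and C_trans: "\<forall>X\<in>C. \<forall>m\<in>M. X + m \<in> C"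
    and le_trans_inv: "\<forall>m\<in>M. \<forall>X Y. X \<le> Y \<longrightarrow> X + m \<le> Y + m"
  shows "R_Max C H m = H m"
proof -
  have "0 \<in> C"
    using M subspace_0 by blast
  then show ?thesis
    using R_Max_translate[OF H M m exhaustive C_trans le_trans_inv, of 0] R_Max_zero[OF H]
    by simp
qed

lemma risk_measure_le_R_Max:
  assumes R: "risk_measure C M R" and D: "deviation_measure C M D"
    and HRD: "\<forall>X\<in>C. H X = R X + D X" and exhaustive: "\<forall>X. \<exists>X0\<in>C. X0 \<ge> X"
  shows "R X \<le> R_Max C H X"
proof (rule le_R_Max)
  fix X0 assume X0: "X0 \<in> C" "X \<le> X0"
  have "R X \<le> R X0"
    using R X0(2) unfolding risk_measure_def by blast
  also have "\<dots> \<le> R X0 + D X0"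
    using D X0(1) unfolding deviation_measure_def by simp
  finally show "R X \<le> H X0"
    using HRD X0(1) by simp
qed (use exhaustive in blast)

theorem theorem4p6:
  fixes C M :: "'a::{real_vector,preorder} set" and H :: "'a \<Rightarrow> real"
  assumes C_ne: "C \<noteq> {}"
    and M_sub: "subspace M" and M_ne: "M \<noteq> {}" and MC: "M \<subseteq> C"
    and exhaustive: "\<forall>X. \<exists>X0\<in>C. X0 \<ge> X"
    and C_trans: "\<forall>X\<in>C. \<forall>m\<in>M. X + m \<in> C"
    and le_trans_inv: "\<forall>m\<in>M. \<forall>X Y. X \<le> Y \<longrightarrow> X + m \<le> Y + m"
    and H: "premium_principle C M H"
  shows "risk_measure C M (R_Max C H)
     \<and> (\<forall>X\<in>C. R_Max C H X \<le> H X)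
     \<and> (\<forall>m\<in>M. R_Max C H m = H m)
     \<and> deviation_measure C M (\<lambda>X. H X - R_Max C H X)
     \<and> (\<forall>X\<in>C. H X = R_Max C H X + (H X - R_Max C H X))
     \<and> (\<forall>R D. risk_measure C M R \<and> deviation_measure C M D
          \<and> (\<forall>X\<in>C. H X = R X + D X)
          \<longrightarrow> (\<forall>X. R X \<le> R_Max C H X) \<and> (\<forall>X\<in>C. D X \<ge> H X - R_Max C H X))"
proof -
  note translate = R_Max_translate[OF H M_sub MC _ exhaustive C_trans le_trans_inv]
  note on_M = R_Max_subspace[OF H M_sub MC _ exhaustive C_trans le_trans_inv]
  have zero: "R_Max C H 0 = 0"
    using R_Max_zero[OF H] M_sub MC subspace_0 by blast
  have "risk_measure C M (R_Max C H)"
    unfolding risk_measure_def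
    using translate on_M zero R_Max_mono[OF H exhaustive] by simp
  moreover have "deviation_measure C M (\<lambda>X. H X - R_Max C H X)"
    unfolding deviation_measure_def
    using translate zero H R_Max_le_self[OF H] unfolding premium_principle_def by simp
  moreover have "H X - R_Max C H X \<le> D X"
    if "risk_measure C M R" "deviation_measure C M D" "\<forall>X\<in>C. H X = R X + D X" "X \<in> C"
    for R D X
    using risk_measure_le_R_Max[OF that(1-3) exhaustive, of X] that(3,4) by simp
  ultimately show ?thesis
    using R_Max_le_self[OF H] on_M risk_measure_le_R_Max[OF _ _ _ exhaustive] by auto
qed

end
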